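(* Let $n = 8k+5$ with $k \ge 0$ an integer, and let $M = \frac{3n-1}{2}$. Then every transposition $(2i-1,2i+1)\in S_M$ with $1 \le 2i-1$ and $2i+1 \le M$ can be obtained from $(1,3)$ by successive conjugation by $n$-crossing permutations over $S_M$; that is, it equals $g(1,3)g^{-1}$ for some $g$ that is a product of $n$-crossing permutations over $S_M$.
   Context: For integers $2\le n\le m$ and $1 \le j \le m-n+1$, the $n$-crossing permutation $\pi_j\in S_m$ is $\pi_j=(j,\,j+n-1)(j+1,\,j+n-2)\cdots$, i.e. the involution sending $i \mapsto 2j+n-1-i$ for $j\le i\le j+n-1$ and fixing all other elements of $\{1,\dots,m\}$. The $n$-crossing permutations over $S_m$ are $\pi_1,\dots,\pi_{m-n+1}$. *)

theory Defs
  imports Main "HOL-Combinatorics.Transposition"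
begin

text \<open>The n-crossing permutation pi_j in S_m, as a function on nat (identity outside j..j+n-1,
  hence also outside 1..m when 1 <= j and j+n-1 <= m).\<close>
definition crossing :: "nat \<Rightarrow> nat \<Rightarrow> nat \<Rightarrow> nat" where
  "crossing n j i = (if j \<le> i \<and> i \<le> j + n - 1 then 2 * j + n - 1 - i else i)"

inductive_set crossing_products :: "nat \<Rightarrow> nat \<Rightarrow> (nat \<Rightarrow> nat) set"
  for n m :: nat where
  id_in: "id \<in> crossing_products n m"
| comp_in: "\<lbrakk>1 \<le> j; j \<le> m - n + 1; g \<in> crossing_products n m\<rbrakk>
     \<Longrightarrow> crossing n j \<circ> g \<in> crossing_products n m"

end

theory Submission
  imports Defs
begin

text \<open>Reflecting about two adjacent centres is a translation: \<open>\<pi>\<^sub>j\<^sub>+\<^sub>1 \<circ> \<pi>\<^sub>j\<close> maps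
  \<open>x \<mapsto> x + 2\<close> on the window \<open>[j, j + n - 2]\<close>, which holds a pair \<open>{a, a + 2}\<close> once \<open>n \<ge> 4\<close>.
  Since \<open>M - n + 1 \<ge> 2\<close>, such pairs of crossings are available in \<open>S\<^sub>M\<close>, and sliding the window
  along with the pair carries \<open>(1, 3)\<close> to \<open>(2i - 1, 2i + 1)\<close> by a product \<open>g\<close> of crossings.\<close>

lemma crossing_involutive: "0 < n \<Longrightarrow> crossing n j (crossing n j x) = x"
  unfolding crossing_def by auto

lemma bij_crossing: "0 < n \<Longrightarrow> bij (crossing n j)"
  by (metis bijI' crossing_involutive)

lemma crossing_products_bij: "g \<in> crossing_products n m \<Longrightarrow> 0 < n \<Longrightarrow> bij g"
  by (induction rule: crossing_products.induct) (simp_all add: bij_comp bij_crossing)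

lemma transpose_conj:
  assumes "bij g"
  shows "transpose (g a) (g b) = g \<circ> transpose a b \<circ> inv g"
proof
  fix x
  have "transpose (g a) (g b) (g (inv g x)) = g (transpose a b (inv g x))"
    using assms by (simp add: transpose_apply_commute bij_is_inj)
  then show "transpose (g a) (g b) x = (g \<circ> transpose a b \<circ> inv g) x"
    using assms by (metis bij_is_surj comp_apply surj_f_inv_f)
qed

lemma crossing_Suc_crossing:
  "j \<le> x \<Longrightarrow> x + 2 \<le> j + n \<Longrightarrow> crossing n (Suc j) (crossing n j x) = x + 2"
  unfolding crossing_def by auto

lemma crossing_products_translate_pair:
  assumes "4 \<le> n" "n < m" "1 \<le> a" "a + 2 + 2 * d \<le> m"
  shows "\<exists>g \<in> crossing_products n m. g a = a + 2 * d \<and> g (a + 2) = a + 2 + 2 * d"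
  using assms(4)
proof (induction d)
  case 0
  show ?case by (auto intro: bexI[OF _ crossing_products.id_in])
next
  case (Suc d)
  then obtain g where g: "g \<in> crossing_products n m"
    and ga: "g a = a + 2 * d" and gb: "g (a + 2) = a + 2 + 2 * d"
    by auto
  define j where "j = min (a + 2 * d) (m - n)"
  have j: "1 \<le> j" "Suc j \<le> m - n + 1" "j \<le> a + 2 * d" "a + 2 * d + 4 \<le> j + n"
    using assms Suc.prems unfolding j_def by auto
  let ?h = "crossing n (Suc j) \<circ> (crossing n j \<circ> g)"
  have "?h \<in> crossing_products n m"
    using j g by (intro crossing_products.comp_in) auto
  moreover have "?h a = a + 2 * Suc d" "?h (a + 2) = a + 2 + 2 * Suc d"
    using j ga gb crossing_Suc_crossing[of j "a + 2 * d" n] crossing_Suc_crossing[of j "a + 2 + 2 * d" n]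
    by simp_all
  ultimately show ?case by blast
qed

theorem lemma4p5:
  fixes k i :: nat
  defines "n \<equiv> 8 * k + 5"
  defines "M \<equiv> (3 * n - 1) div 2"
  assumes "1 \<le> 2 * i - 1" and "2 * i + 1 \<le> M"
  shows "\<exists>g \<in> crossing_products n M.
           transpose (2 * i - 1) (2 * i + 1) = g \<circ> transpose 1 3 \<circ> inv g"
proof -
  have M: "M = 12 * k + 7" unfolding M_def n_def by simp
  have "\<exists>g \<in> crossing_products n M. g 1 = 1 + 2 * (i - 1) \<and> g (1 + 2) = 1 + 2 + 2 * (i - 1)"
    by (rule crossing_products_translate_pair) (use assms(4) in \<open>auto simp: M n_def\<close>)
  moreover have "1 + 2 * (i - 1) = 2 * i - 1" "1 + 2 + 2 * (i - 1) = 2 * i + 1"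
    using assms(3) by auto
  ultimately obtain g where g: "g \<in> crossing_products n M" "g 1 = 2 * i - 1" "g 3 = 2 * i + 1"
    by (auto simp: numeral_3_eq_3)
  have "bij g" using crossing_products_bij[OF g(1)] n_def by simp
  then have "transpose (g 1) (g 3) = g \<circ> transpose 1 3 \<circ> inv g" by (rule transpose_conj)
  with g show ?thesis by auto
qed

end
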